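(* Let $(\mathsf K,\mathsf D)$ be a differential ring, $a_1\in\mathsf K$, $\nabla:=\mathsf D+a_1\in\mathsf K\langle\mathsf D\rangle$, and $u\in\mathsf K$. For every $m\ge0$, $$(\nabla+u)^m=\sum_{j=0}^m\binom mj Q_{m-j}(u)\,\nabla^j$$ in $\mathsf K\langle\mathsf D\rangle$.
   Context: $(\mathsf K,\mathsf D)$: unital associative (possibly noncommutative) ring with derivation; $\mathsf K\langle\mathsf D\rangle$: Ore algebra with $\mathsf D a=a\mathsf D+\mathsf D(a)$. Define the derivation $\Delta_{a_1}(b):=\mathsf D(b)+a_1b-ba_1$ on $\mathsf K$. The covariant Bell polynomials are $Q_0(u)=1$, $Q_{m+1}(u)=\Delta_{a_1}(Q_m(u))+u\,Q_m(u)$. *)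

theory Defs
  imports Main
begin

definition is_derivation :: "('a::ring_1 \<Rightarrow> 'a) \<Rightarrow> bool" where
  "is_derivation D \<longleftrightarrow> (\<forall>a b. D (a + b) = D a + D b \<and> D (a * b) = D a * b + a * D b)"

(* Elements of the Ore algebra K<D>: finite sums  \<Sum>_i c_i D^i  (coefficients on the left),
   represented by the list [c_0, c_1, ...]; trailing zeros are allowed. *)
type_synonym 'a ore = "'a list"

definition ore_coef :: "'a::zero ore \<Rightarrow> nat \<Rightarrow> 'a" where
  "ore_coef p i = (if i < length p then p ! i else 0)"

definition ore_eq :: "'a::zero ore \<Rightarrow> 'a ore \<Rightarrow> bool" where
  "ore_eq p q \<longleftrightarrow> (\<forall>i. ore_coef p i = ore_coef q i)"

definition ore_const :: "'a \<Rightarrow> 'a ore" where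
  "ore_const a = [a]"

definition ore_D :: "'a::{zero,one} ore" where
  "ore_D = [0, 1]"

definition ore_add :: "'a::monoid_add ore \<Rightarrow> 'a ore \<Rightarrow> 'a ore" where
  "ore_add p q = map (\<lambda>i. ore_coef p i + ore_coef q i) [0..<max (length p) (length q)]"

(* Multiplication in K<D>, determined by  D a = a D + D(a), i.e.
   (a D^i)(b D^j) = \<Sum>_{k\<le>i} binom(i,k) a D^k(b) D^(i-k+j). *)
definition ore_mult :: "('a::ring_1 \<Rightarrow> 'a) \<Rightarrow> 'a ore \<Rightarrow> 'a ore \<Rightarrow> 'a ore" where
  "ore_mult D p q = map (\<lambda>n. \<Sum>i<length p. \<Sum>j<length q. \<Sum>k\<le>i.
       (if i - k + j = n then ore_coef p i * (of_nat (i choose k) * (D ^^ k) (ore_coef q j)) else 0))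
     [0..<length p + length q]"

primrec ore_pow :: "('a::ring_1 \<Rightarrow> 'a) \<Rightarrow> 'a ore \<Rightarrow> nat \<Rightarrow> 'a ore" where
  "ore_pow D p 0 = ore_const 1"
| "ore_pow D p (Suc m) = ore_mult D p (ore_pow D p m)"

definition ore_sum :: "'a::monoid_add ore list \<Rightarrow> 'a ore" where
  "ore_sum ps = foldr ore_add ps []"

definition Delta :: "('a::ring_1 \<Rightarrow> 'a) \<Rightarrow> 'a \<Rightarrow> 'a \<Rightarrow> 'a" where
  "Delta D a1 b = D b + a1 * b - b * a1"

primrec bellQ :: "('a::ring_1 \<Rightarrow> 'a) \<Rightarrow> 'a \<Rightarrow> nat \<Rightarrow> 'a \<Rightarrow> 'a" where
  "bellQ D a1 0 u = 1"
| "bellQ D a1 (Suc m) u = Delta D a1 (bellQ D a1 m u) + u * bellQ D a1 m u"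

end

theory Submission imports Defs begin

(* For q \<in> K one has \<nabla> q = q \<nabla> + \<Delta>_{a1}(q), hence (\<nabla> + u) q = q \<nabla> + (\<Delta>_{a1}(q) + u q).
   Iterating a Leibniz rule of this shape gives a binomial expansion of (\<nabla> + u)^m whose
   coefficients in K are the iterates of q \<mapsto> \<Delta>_{a1}(q) + u q on 1, i.e. the Q_k(u).
   The computation is carried out on coefficient sequences, where left multiplication by
   D + c is an explicit additive map. *)

lemma mult_of_nat_left_commute: "a * (of_nat k * x) = of_nat k * (a * (x::'a::semiring_1))"
  by (metis mult.assoc mult_of_nat_commute)

lemma derivation_add: "is_derivation D \<Longrightarrow> D (a + b) = D a + D b"
  unfolding is_derivation_def by blast

lemma derivation_mult: "is_derivation D \<Longrightarrow> D (a * b) = D a * b + a * D b"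
  unfolding is_derivation_def by blast

lemma derivation_zero: "is_derivation D \<Longrightarrow> D 0 = 0"
  using derivation_add[of D 0 0] by simp

lemma derivation_one: "is_derivation D \<Longrightarrow> D 1 = 0"
  using derivation_mult[of D 1 1] by simp

lemma derivation_of_nat: "is_derivation D \<Longrightarrow> D (of_nat k) = 0"
  by (induction k) (simp_all add: derivation_zero derivation_one derivation_add)

lemma derivation_of_nat_mult: "is_derivation D \<Longrightarrow> D (of_nat k * x) = of_nat k * D x"
  by (simp add: derivation_mult derivation_of_nat)

lemma funpow_Leibniz_binomial:
  fixes L M :: "('b \<Rightarrow> 'a::ring_1) \<Rightarrow> 'b \<Rightarrow> 'a" and \<delta> :: "'a \<Rightarrow> 'a"
  assumes L_add: "\<And>f g. L (\<lambda>x. f x + g x) = (\<lambda>x. L f x + L g x)"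
    and L_Leibniz: "\<And>q f. L (\<lambda>x. q * f x) = (\<lambda>x. \<delta> q * f x + q * M f x)"
    and \<delta>_of_nat_mult: "\<And>k q. \<delta> (of_nat k * q) = of_nat k * \<delta> q"
  shows "(L ^^ m) f = (\<lambda>x. \<Sum>j\<le>m. of_nat (m choose j) * (\<delta> ^^ (m - j)) 1 * (M ^^ j) f x)"
proof (induction m)
  case 0
  show ?case by simp
next
  case (Suc m)
  define c where "c j = (\<delta> ^^ j) 1" for j
  define N where "N j = (M ^^ j) f" for j
  have L_sum: "L (\<lambda>x. \<Sum>j\<in>A. g j x) = (\<lambda>x. \<Sum>j\<in>A. L (g j) x)"
    if "finite A" for A and g :: "nat \<Rightarrow> 'b \<Rightarrow> 'a"
    using that
  proof (induction A rule: finite_induct)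
    case empty
    show ?case using L_Leibniz[of 0 "\<lambda>_. 0"] by simp
  next
    case (insert j A)
    then show ?case by (simp add: L_add)
  qed
  have "(L ^^ Suc m) f = (\<lambda>x. \<Sum>j\<le>m. of_nat (m choose j) * c (Suc (m - j)) * N j x
                                 + of_nat (m choose j) * c (m - j) * N (Suc j) x)"
    by (simp add: Suc.IH L_sum L_Leibniz \<delta>_of_nat_mult c_def N_def)
  also have "\<dots> = (\<lambda>x. \<Sum>j\<le>Suc m. of_nat (Suc m choose j) * c (Suc m - j) * N j x)"
  proof
    fix x
    have "(\<Sum>j\<le>m. of_nat (m choose j) * c (Suc (m - j)) * N j x)
        = (\<Sum>j\<le>Suc m. of_nat (m choose j) * c (Suc m - j) * N j x)"
      by (simp add: binomial_eq_0 Suc_diff_le)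
    also have "\<dots> = c (Suc m) * N 0 x + (\<Sum>j\<le>m. of_nat (m choose Suc j) * c (m - j) * N (Suc j) x)"
      by (subst sum.atMost_Suc_shift) simp
    finally have pascal_shift: "(\<Sum>j\<le>m. of_nat (m choose j) * c (Suc (m - j)) * N j x)
        = c (Suc m) * N 0 x + (\<Sum>j\<le>m. of_nat (m choose Suc j) * c (m - j) * N (Suc j) x)" .
    show "(\<Sum>j\<le>m. of_nat (m choose j) * c (Suc (m - j)) * N j x
                           + of_nat (m choose j) * c (m - j) * N (Suc j) x)
        = (\<Sum>j\<le>Suc m. of_nat (Suc m choose j) * c (Suc m - j) * N j x)"
      unfolding sum.distrib pascal_shift
      by (subst sum.atMost_Suc_shift) (simp add: sum.distrib algebra_simps)
  qed
  finally show ?case by (simp add: c_def N_def)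
qed

lemma ore_coef_add: "ore_coef (ore_add p q) n = ore_coef p n + ore_coef q n"
  by (auto simp: ore_add_def ore_coef_def)

lemma ore_coef_sum: "ore_coef (ore_sum ps) n = (\<Sum>p\<leftarrow>ps. ore_coef p n)"
  by (induction ps) (simp_all add: ore_sum_def ore_coef_add, simp add: ore_coef_def)

lemma ore_coef_sum_upt:
  "ore_coef (ore_sum (map f [0..<Suc m])) n = (\<Sum>j\<le>m. ore_coef (f j) n)"
  by (simp only: ore_coef_sum map_map comp_def interv_sum_list_conv_sum_set_nat set_upt
      atLeast0LessThan lessThan_Suc_atMost)

lemma ore_coef_const_one: "ore_coef (ore_const 1) n = (if n = 0 then 1 else 0)"
  by (simp add: ore_const_def ore_coef_def)

lemma ore_coef_mult:
  "ore_coef (ore_mult D p q) n = (\<Sum>i<length p. \<Sum>j<length q. \<Sum>k\<le>i.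
     (if i - k + j = n then ore_coef p i * (of_nat (i choose k) * (D ^^ k) (ore_coef q j)) else 0))"
proof (cases "n < length p + length q")
  case True
  then show ?thesis by (simp add: ore_mult_def ore_coef_def)
next
  case False
  then have "\<And>i j k. i < length p \<Longrightarrow> j < length q \<Longrightarrow> i + j - k \<noteq> n" by linarith
  with False show ?thesis by (simp add: ore_mult_def ore_coef_def)
qed

lemma ore_coef_mult_const: "ore_coef (ore_mult D (ore_const c) q) n = c * ore_coef q n"
  by (simp add: ore_coef_mult ore_const_def if_distrib[of "\<lambda>x. c * x"] cong: if_cong)
     (simp add: ore_coef_def)

definition D_plus_action :: "('a::ring_1 \<Rightarrow> 'a) \<Rightarrow> 'a \<Rightarrow> (nat \<Rightarrow> 'a) \<Rightarrow> nat \<Rightarrow> 'a" where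
  "D_plus_action D c f n = c * f n + D (f n) + (case n of 0 \<Rightarrow> 0 | Suc k \<Rightarrow> f k)"

lemma ore_coef_mult_D_plus:
  assumes "is_derivation D"
  shows "ore_coef (ore_mult D [c, 1] q) = D_plus_action D c (ore_coef q)"
proof
  fix n
  have coef_D_plus: "ore_coef [c, 1] 0 = c" "ore_coef [c, 1] (Suc 0) = 1"
    by (simp_all add: ore_coef_def)
  have "ore_coef (ore_mult D [c, 1] q) n = (\<Sum>j<length q. if j = n then c * ore_coef q j else 0)
      + (\<Sum>j<length q. if j = n then D (ore_coef q j) else 0)
      + (\<Sum>j<length q. if Suc j = n then ore_coef q j else 0)"
    unfolding ore_coef_mult
    by (simp add: numeral_2_eq_2 lessThan_Suc atMost_Suc sum.distrib algebra_simps coef_D_plus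
        sum_distrib_left if_distrib[of "\<lambda>x. c * x"] cong: if_cong)
  also have "\<dots> = D_plus_action D c (ore_coef q) n"
    by (cases n) (auto simp: D_plus_action_def ore_coef_def derivation_zero[OF assms])
  finally show "ore_coef (ore_mult D [c, 1] q) n = D_plus_action D c (ore_coef q) n" .
qed

lemma ore_coef_pow_D_plus:
  assumes "is_derivation D"
  shows "ore_coef (ore_pow D [c, 1] m) = (D_plus_action D c ^^ m) (\<lambda>n. if n = 0 then 1 else 0)"
  by (induction m) (simp_all add: ore_coef_const_one ore_coef_mult_D_plus[OF assms])

lemma D_plus_action_add:
  assumes "is_derivation D"
  shows "D_plus_action D c (\<lambda>n. f n + g n) = (\<lambda>n. D_plus_action D c f n + D_plus_action D c g n)"
  by (auto simp: D_plus_action_def derivation_add[OF assms] algebra_simps split: nat.split)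

lemma D_plus_action_Leibniz:
  assumes "is_derivation D"
  shows "D_plus_action D (a1 + u) (\<lambda>n. q * f n)
       = (\<lambda>n. (Delta D a1 q + u * q) * f n + q * D_plus_action D a1 f n)"
  by (auto simp: D_plus_action_def Delta_def derivation_mult[OF assms] algebra_simps split: nat.split)

lemma bellQ_eq_funpow: "bellQ D a1 k u = ((\<lambda>q. Delta D a1 q + u * q) ^^ k) 1"
  by (induction k) simp_all

lemma Delta_of_nat_mult:
  assumes "is_derivation D"
  shows "Delta D a1 (of_nat k * q) = of_nat k * Delta D a1 q"
  by (simp add: Delta_def derivation_of_nat_mult[OF assms] mult_of_nat_left_commute mult.assoc
      right_diff_distrib distrib_left)

lemma ore_D_plus_const: "ore_add ore_D (ore_const c) = [c, 1]"
  by (simp add: ore_add_def ore_D_def ore_const_def ore_coef_def upt_rec)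

lemma ore_add_D_plus_const: "ore_add [c, 1] (ore_const d) = [c + d, 1]"
  by (simp add: ore_add_def ore_const_def ore_coef_def upt_rec)

theorem mainTheorem5:
  fixes D :: "'a::ring_1 \<Rightarrow> 'a" and a1 u :: 'a and m :: nat
  assumes "is_derivation D"
  shows "ore_eq
     (ore_pow D (ore_add (ore_add ore_D (ore_const a1)) (ore_const u)) m)
     (ore_sum (map (\<lambda>j. ore_mult D (ore_const (of_nat (m choose j) * bellQ D a1 (m - j) u))
                                   (ore_pow D (ore_add ore_D (ore_const a1)) j))
                   [0..<Suc m]))"
proof -
  have "(D_plus_action D (a1 + u) ^^ m) e
      = (\<lambda>n. \<Sum>j\<le>m. of_nat (m choose j) * bellQ D a1 (m - j) u * (D_plus_action D a1 ^^ j) e n)"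
    for e
    unfolding bellQ_eq_funpow
    by (rule funpow_Leibniz_binomial)
       (simp_all add: D_plus_action_add D_plus_action_Leibniz Delta_of_nat_mult assms
         mult_of_nat_left_commute distrib_left mult.assoc)
  then show ?thesis
    unfolding ore_eq_def ore_D_plus_const ore_add_D_plus_const ore_coef_sum_upt ore_coef_mult_const
    by (simp add: ore_coef_pow_D_plus[OF assms])
qed

end
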